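(* Let $d, N, K \geq 1$ be integers, let $\mathbf{y}_1, \ldots, \mathbf{y}_N \in \mathbb{R}^d$, and let $\mathbf{Y} \in \mathbb{R}^{d \times N}$ be the matrix with columns $\mathbf{y}_1, \ldots, \mathbf{y}_N$; assume $\mathbf{Y} \neq 0$. Let $\rho_k^{[i]} \geq 0$ ($i \in \{1,\ldots,N\}$, $k \in \{1,\ldots,K\}$) satisfy $\sum_{k=1}^K \rho_k^{[i]} = 1$ for every $i$. For $k \in \{1,\ldots,K\}$ let $\mathbf{A}_k = \sum_{i=1}^N \rho_k^{[i]} \mathbf{y}_i \mathbf{y}_i^\mathrm{T}$. For every $\delta > 0$, set $\tau := \delta / \|\mathbf{Y}\|_\mathrm{F}^2$ and \[ \tilde{\mathbf{A}}_k = \sum_{\substack{i=1 \\ \rho_k^{[i]} \geq \tau}}^N \rho_k^{[i]} \mathbf{y}_i \mathbf{y}_i^\mathrm{T}. \] Then $|\lambda_1(\mathbf{A}_k) - \lambda_1(\tilde{\mathbf{A}}_k)| \leq \delta$.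
   Context: $\lambda_1(\mathbf{M})$ denotes the largest eigenvalue of a symmetric matrix $\mathbf{M}$; $\|\cdot\|_\mathrm{F}$ is the Frobenius norm. *)

theory Defs
  imports "HOL-Analysis.Analysis"
begin

definition outer :: "real ^ 'd \<Rightarrow> real ^ 'd ^ 'd" where
  "outer y = (\<chi> i j. y $ i * y $ j)"

definition eigenvalues :: "real ^ 'd ^ 'd \<Rightarrow> real set" where
  "eigenvalues A = {c. \<exists>v. v \<noteq> 0 \<and> A *v v = c *\<^sub>R v}"

definition lambda1 :: "real ^ 'd ^ 'd \<Rightarrow> real" where
  "lambda1 A = Max (eigenvalues A)"

definition frob_norm :: "nat \<Rightarrow> (nat \<Rightarrow> real ^ 'd) \<Rightarrow> real" where
  "frob_norm N y = sqrt (\<Sum>i=1..N. \<Sum>j\<in>UNIV. (y i $ j)\<^sup>2)"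

end

theory Submission
  imports Defs
begin

text \<open>For a symmetric matrix, \<open>\<lambda>\<^sub>1\<close> is the maximum of \<open>x \<bullet> M x\<close> over the unit sphere: a
  maximiser exists by compactness, it is an eigenvector by a first-variation argument, and
  every eigenvalue is a value of the form on the sphere. For \<open>A = \<Sum>\<^sub>i \<rho>\<^sub>i y\<^sub>i y\<^sub>i\<^sup>T\<close> the form is
  \<open>\<Sum>\<^sub>i \<rho>\<^sub>i (y\<^sub>i \<bullet> x)\<^sup>2\<close>. Dropping nonnegative terms can only decrease it, so
  \<open>\<lambda>\<^sub>1(\<tilde>A) \<le> \<lambda>\<^sub>1(A)\<close>; conversely each dropped term has \<open>\<rho>\<^sub>i < \<tau>\<close> and \<open>(y\<^sub>i \<bullet> x)\<^sup>2 \<le> \<parallel>y\<^sub>i\<parallel>\<^sup>2\<close> on the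
  sphere, so together they contribute at most \<open>\<tau> \<parallel>Y\<parallel>\<^sub>F\<^sup>2 = \<delta>\<close>.\<close>

definition quad_form :: "real^'n^'n \<Rightarrow> real^'n \<Rightarrow> real" where
  "quad_form M x = x \<bullet> (M *v x)"

lemma symmetric_matrix_inner_commute:
  fixes M :: "real^'n^'n"
  assumes "transpose M = M"
  shows "x \<bullet> (M *v z) = (M *v x) \<bullet> z"
  by (metis assms dot_lmul_matrix transpose_matrix_vector)

lemma nonpos_quadratic_imp_linear_coeff_zero:
  fixes a b :: real
  assumes "\<And>t. a * t + b * t\<^sup>2 \<le> 0"
  shows "a = 0"
proof (rule ccontr)
  assume "a \<noteq> 0"
  define c where "c = \<bar>b\<bar> + 1"
  have "c > 0" "c + b > 0" by (auto simp: c_def)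
  then have "a * (a / c) + b * (a / c)\<^sup>2 = a\<^sup>2 * (c + b) / c\<^sup>2"
    by (simp add: field_simps power2_eq_square)
  also have "\<dots> > 0" using \<open>a \<noteq> 0\<close> \<open>c + b > 0\<close> \<open>c > 0\<close> by simp
  finally show False using assms[of "a / c"] by simp
qed

lemma quad_form_scaleR: "quad_form M (c *\<^sub>R x) = c\<^sup>2 * quad_form M x"
  by (simp add: quad_form_def matrix_vector_mult_scaleR power2_eq_square)

lemma quad_form_le_norm_sq:
  assumes "\<And>z. norm z = 1 \<Longrightarrow> quad_form M z \<le> m"
  shows "quad_form M x \<le> m * (norm x)\<^sup>2"
proof (cases "x = 0")
  case True
  then show ?thesis by (simp add: quad_form_def)
next
  case False
  then have "(1 / norm x)\<^sup>2 * quad_form M x \<le> m"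
    using assms[of "(1 / norm x) *\<^sub>R x"] by (simp add: quad_form_scaleR)
  with False show ?thesis by (simp add: field_simps)
qed

lemma eigenvalue_le_sphere_bound:
  assumes "c \<in> eigenvalues M" and "\<And>z. norm z = 1 \<Longrightarrow> quad_form M z \<le> m"
  shows "c \<le> m"
proof -
  obtain v where "v \<noteq> 0" and v: "M *v v = c *\<^sub>R v"
    using assms(1) by (auto simp: eigenvalues_def)
  have "c * (norm v)\<^sup>2 = quad_form M v"
    by (simp add: quad_form_def v dot_square_norm)
  also have "\<dots> \<le> m * (norm v)\<^sup>2"
    using assms(2) by (rule quad_form_le_norm_sq)
  finally show ?thesis using \<open>v \<noteq> 0\<close> by simp
qed

lemma finite_eigenvalues_symmetric:
  fixes M :: "real^'n^'n"
  assumes "transpose M = M"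
  shows "finite (eigenvalues M)"
proof -
  define f where "f c = (SOME v. v \<noteq> 0 \<and> M *v v = c *\<^sub>R v)" for c
  have f: "f c \<noteq> 0" "M *v f c = c *\<^sub>R f c" if "c \<in> eigenvalues M" for c
    using someI_ex[of "\<lambda>v. v \<noteq> 0 \<and> M *v v = c *\<^sub>R v"] that
    by (auto simp: eigenvalues_def f_def)
  have "inj_on f (eigenvalues M)"
    by (rule inj_onI) (metis f scaleR_cancel_right)
  moreover have "pairwise orthogonal (f ` eigenvalues M)"
  proof (clarsimp simp: pairwise_def orthogonal_def)
    fix c c' assume c: "c \<in> eigenvalues M" "c' \<in> eigenvalues M" "f c \<noteq> f c'"
    have "c' * (f c \<bullet> f c') = c * (f c \<bullet> f c')"
      using symmetric_matrix_inner_commute[OF assms, of "f c" "f c'"] by (simp add: f c)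
    with c show "f c \<bullet> f c' = 0" by auto
  qed
  then have "independent (f ` eigenvalues M)"
    by (rule pairwise_orthogonal_independent) (use f in auto)
  then have "finite (f ` eigenvalues M)"
    using independent_bound by blast
  ultimately show ?thesis
    using finite_imageD by blast
qed

text \<open>A maximiser of the quadratic form on the unit sphere is an eigenvector: the form
  \<open>m \<parallel>z\<parallel>\<^sup>2 - z \<bullet> M z\<close> is nonnegative and vanishes at \<open>x\<^sub>0\<close>, so its first variation there is zero.\<close>
lemma sphere_maximiser_is_eigenvector:
  fixes M :: "real^'n^'n"
  assumes "transpose M = M" and "norm x\<^sub>0 = 1"
    and max: "\<And>z. norm z = 1 \<Longrightarrow> quad_form M z \<le> quad_form M x\<^sub>0"
  shows "M *v x\<^sub>0 = quad_form M x\<^sub>0 *\<^sub>R x\<^sub>0"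
proof -
  define m where "m = quad_form M x\<^sub>0"
  define r where "r = M *v x\<^sub>0 - m *\<^sub>R x\<^sub>0"
  have "x\<^sub>0 \<bullet> x\<^sub>0 = 1"
    using assms(2) by (simp add: dot_square_norm)
  have "2 * (r \<bullet> r) * t + (quad_form M r - m * (r \<bullet> r)) * t\<^sup>2 \<le> 0" for t
  proof -
    have "quad_form M (x\<^sub>0 + t *\<^sub>R r) \<le> m * (norm (x\<^sub>0 + t *\<^sub>R r))\<^sup>2"
      using max unfolding m_def by (rule quad_form_le_norm_sq)
    moreover have "quad_form M (x\<^sub>0 + t *\<^sub>R r)
        = m + 2 * t * (r \<bullet> (M *v x\<^sub>0)) + t\<^sup>2 * quad_form M r"
      using symmetric_matrix_inner_commute[OF assms(1), of x\<^sub>0 r]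
      by (simp add: quad_form_def m_def matrix_vector_right_distrib matrix_vector_mult_scaleR
          inner_add_left inner_add_right inner_commute algebra_simps power2_eq_square)
    moreover have "(norm (x\<^sub>0 + t *\<^sub>R r))\<^sup>2 = 1 + 2 * t * (r \<bullet> x\<^sub>0) + t\<^sup>2 * (r \<bullet> r)"
      using \<open>x\<^sub>0 \<bullet> x\<^sub>0 = 1\<close> unfolding power2_norm_eq_inner
      by (simp add: inner_add_left inner_add_right inner_commute algebra_simps power2_eq_square)
    ultimately have "m + 2 * t * (r \<bullet> (M *v x\<^sub>0)) + t\<^sup>2 * quad_form M r
        \<le> m * (1 + 2 * t * (r \<bullet> x\<^sub>0) + t\<^sup>2 * (r \<bullet> r))"
      by simp
    moreover have "r \<bullet> r = r \<bullet> (M *v x\<^sub>0) - m * (r \<bullet> x\<^sub>0)"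
      using inner_diff_right[of r "M *v x\<^sub>0" "m *\<^sub>R x\<^sub>0"] by (simp add: r_def[symmetric])
    then have "2 * (r \<bullet> r) * t + (quad_form M r - m * (r \<bullet> r)) * t\<^sup>2
        = (m + 2 * t * (r \<bullet> (M *v x\<^sub>0)) + t\<^sup>2 * quad_form M r)
          - m * (1 + 2 * t * (r \<bullet> x\<^sub>0) + t\<^sup>2 * (r \<bullet> r))"
      by algebra
    ultimately show ?thesis
      by linarith
  qed
  then have "2 * (r \<bullet> r) = 0"
    by (rule nonpos_quadratic_imp_linear_coeff_zero)
  then show ?thesis by (simp add: r_def m_def)
qed

lemma quad_form_attains_max_on_sphere:
  fixes M :: "real^'n^'n"
  obtains x\<^sub>0 where "norm x\<^sub>0 = 1" and "\<And>z. norm z = 1 \<Longrightarrow> quad_form M z \<le> quad_form M x\<^sub>0"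
proof -
  have "continuous_on (sphere 0 1) (quad_form M)"
    unfolding quad_form_def
    by (intro continuous_intros linear_continuous_on matrix_vector_mul_bounded_linear)
  moreover have "sphere (0::real^'n) 1 \<noteq> {}"
    using vector_choose_size[of 1] by auto
  ultimately show ?thesis
    using continuous_attains_sup[of "sphere 0 1" "quad_form M"] that by auto
qed

lemma lambda1_eq_sphere_max:
  fixes M :: "real^'n^'n"
  assumes "transpose M = M" and "norm x\<^sub>0 = 1"
    and max: "\<And>z. norm z = 1 \<Longrightarrow> quad_form M z \<le> quad_form M x\<^sub>0"
  shows "lambda1 M = quad_form M x\<^sub>0"
  unfolding lambda1_def
proof (rule Max_eqI)
  show "finite (eigenvalues M)"
    using assms(1) by (rule finite_eigenvalues_symmetric)
  show "c \<le> quad_form M x\<^sub>0" if "c \<in> eigenvalues M" for c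
    using that max by (rule eigenvalue_le_sphere_bound)
  have "x\<^sub>0 \<noteq> 0"
    using assms(2) by auto
  then show "quad_form M x\<^sub>0 \<in> eigenvalues M"
    using sphere_maximiser_is_eigenvector[OF assms] by (auto simp: eigenvalues_def)
qed

lemma lambda1_attained:
  fixes M :: "real^'n^'n"
  assumes "transpose M = M"
  obtains x where "norm x = 1" and "quad_form M x = lambda1 M"
  by (metis quad_form_attains_max_on_sphere lambda1_eq_sphere_max assms)

lemma quad_form_le_lambda1:
  fixes M :: "real^'n^'n"
  assumes "transpose M = M" and "norm x = 1"
  shows "quad_form M x \<le> lambda1 M"
  by (metis quad_form_attains_max_on_sphere lambda1_eq_sphere_max assms)

lemma transpose_sum_outer:
  "transpose (\<Sum>i\<in>I. c i *\<^sub>R outer (y i)) = (\<Sum>i\<in>I. c i *\<^sub>R outer (y i))"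
  by (simp add: vec_eq_iff transpose_def outer_def sum_component mult.commute)

lemma outer_mult_vector: "outer y *v x = (y \<bullet> x) *\<^sub>R y"
  by (simp add: vec_eq_iff matrix_vector_mult_def outer_def inner_vec_def sum_distrib_left
      algebra_simps)

lemma quad_form_sum_outer:
  "finite I \<Longrightarrow> quad_form (\<Sum>i\<in>I. c i *\<^sub>R outer (y i)) x = (\<Sum>i\<in>I. c i * (y i \<bullet> x)\<^sup>2)"
proof (induction I rule: finite_induct)
  case (insert a F)
  then show ?case
    by (simp add: quad_form_def matrix_vector_mult_add_rdistrib scaleR_matrix_vector_assoc[symmetric]
        outer_mult_vector inner_add_right power2_eq_square inner_commute)
qed (simp add: quad_form_def)

lemma lambda1_sum_outer_subset_mono:
  fixes c :: "'i \<Rightarrow> real" and y :: "'i \<Rightarrow> real^'n"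
  assumes "finite S" and "T \<subseteq> S" and "\<And>i. i \<in> S - T \<Longrightarrow> c i \<ge> 0"
  shows "lambda1 (\<Sum>i\<in>T. c i *\<^sub>R outer (y i)) \<le> lambda1 (\<Sum>i\<in>S. c i *\<^sub>R outer (y i))"
proof -
  obtain x where x: "norm x = 1"
    "quad_form (\<Sum>i\<in>T. c i *\<^sub>R outer (y i)) x = lambda1 (\<Sum>i\<in>T. c i *\<^sub>R outer (y i))"
    using lambda1_attained[OF transpose_sum_outer] by blast
  have "finite T"
    using assms(1,2) by (rule finite_subset[rotated])
  have "lambda1 (\<Sum>i\<in>T. c i *\<^sub>R outer (y i)) = (\<Sum>i\<in>T. c i * (y i \<bullet> x)\<^sup>2)"
    unfolding x(2)[symmetric] using \<open>finite T\<close> by (rule quad_form_sum_outer)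
  also have "\<dots> \<le> (\<Sum>i\<in>S. c i * (y i \<bullet> x)\<^sup>2)"
    using assms by (intro sum_mono2) auto
  also have "\<dots> = quad_form (\<Sum>i\<in>S. c i *\<^sub>R outer (y i)) x"
    using assms(1) by (rule quad_form_sum_outer[symmetric])
  also have "\<dots> \<le> lambda1 (\<Sum>i\<in>S. c i *\<^sub>R outer (y i))"
    using transpose_sum_outer x(1) by (rule quad_form_le_lambda1)
  finally show ?thesis .
qed

lemma lambda1_sum_outer_drop_small_terms:
  fixes c :: "'i \<Rightarrow> real" and y :: "'i \<Rightarrow> real^'n"
  assumes "finite S" and "T \<subseteq> S" and "\<And>i. i \<in> S - T \<Longrightarrow> 0 \<le> c i \<and> c i \<le> \<tau>"
  shows "lambda1 (\<Sum>i\<in>S. c i *\<^sub>R outer (y i))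
    \<le> lambda1 (\<Sum>i\<in>T. c i *\<^sub>R outer (y i)) + \<tau> * (\<Sum>i\<in>S - T. (norm (y i))\<^sup>2)"
proof -
  obtain x where x: "norm x = 1"
    "quad_form (\<Sum>i\<in>S. c i *\<^sub>R outer (y i)) x = lambda1 (\<Sum>i\<in>S. c i *\<^sub>R outer (y i))"
    using lambda1_attained[OF transpose_sum_outer] by blast
  have "finite T"
    using assms(1,2) by (rule finite_subset[rotated])
  have dropped: "c i * (y i \<bullet> x)\<^sup>2 \<le> \<tau> * (norm (y i))\<^sup>2" if "i \<in> S - T" for i
  proof -
    have "(y i \<bullet> x)\<^sup>2 \<le> (norm (y i))\<^sup>2"
      using Cauchy_Schwarz_ineq2[of "y i" x] x(1)
      by (metis abs_le_square_iff abs_norm_cancel mult_1_right)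
    then show ?thesis
      using assms(3)[OF that] by (intro mult_mono) auto
  qed
  have "lambda1 (\<Sum>i\<in>S. c i *\<^sub>R outer (y i)) = (\<Sum>i\<in>S. c i * (y i \<bullet> x)\<^sup>2)"
    unfolding x(2)[symmetric] using assms(1) by (rule quad_form_sum_outer)
  also have "\<dots> = (\<Sum>i\<in>T. c i * (y i \<bullet> x)\<^sup>2) + (\<Sum>i\<in>S - T. c i * (y i \<bullet> x)\<^sup>2)"
    using assms(1,2) by (simp add: sum.subset_diff)
  also have "\<dots> \<le> quad_form (\<Sum>i\<in>T. c i *\<^sub>R outer (y i)) x + \<tau> * (\<Sum>i\<in>S - T. (norm (y i))\<^sup>2)"
    using dropped \<open>finite T\<close>
    by (simp add: quad_form_sum_outer sum_distrib_left sum_mono del: Diff_iff)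
  also have "\<dots> \<le> lambda1 (\<Sum>i\<in>T. c i *\<^sub>R outer (y i)) + \<tau> * (\<Sum>i\<in>S - T. (norm (y i))\<^sup>2)"
    using quad_form_le_lambda1[OF transpose_sum_outer x(1)] by simp
  finally show ?thesis .
qed

lemma frob_norm_sq: "(frob_norm N y)\<^sup>2 = (\<Sum>i=1..N. (norm (y i))\<^sup>2)"
  by (simp add: frob_norm_def norm_vec_def L2_set_def sum_nonneg)

theorem lemma1:
  fixes N K :: nat and y :: "nat \<Rightarrow> real ^ 'd" and \<rho> :: "nat \<Rightarrow> nat \<Rightarrow> real"
    and \<delta> :: real and k :: nat
  assumes "N \<ge> 1" and "K \<ge> 1"
    and Ynz: "\<exists>i\<in>{1..N}. y i \<noteq> 0"
    and nonneg: "\<And>i k. i \<in> {1..N} \<Longrightarrow> k \<in> {1..K} \<Longrightarrow> \<rho> k i \<ge> 0"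
    and sum1: "\<And>i. i \<in> {1..N} \<Longrightarrow> (\<Sum>k=1..K. \<rho> k i) = 1"
    and "\<delta> > 0" and "k \<in> {1..K}"
  shows "let \<tau> = \<delta> / (frob_norm N y)\<^sup>2;
             A = (\<Sum>i=1..N. \<rho> k i *\<^sub>R outer (y i));
             At = (\<Sum>i\<in>{i\<in>{1..N}. \<rho> k i \<ge> \<tau>}. \<rho> k i *\<^sub>R outer (y i))
         in \<bar>lambda1 A - lambda1 At\<bar> \<le> \<delta>"
proof -
  define \<tau> where "\<tau> = \<delta> / (frob_norm N y)\<^sup>2"
  define T where "T = {i\<in>{1..N}. \<rho> k i \<ge> \<tau>}"
  have "T \<subseteq> {1..N}" and dropped: "\<And>i. i \<in> {1..N} - T \<Longrightarrow> 0 \<le> \<rho> k i \<and> \<rho> k i \<le> \<tau>"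
    using nonneg \<open>k \<in> {1..K}\<close> by (auto simp: T_def)
  have "(frob_norm N y)\<^sup>2 > 0"
    unfolding frob_norm_sq using Ynz by (auto intro: sum_pos2)
  then have "\<tau> * (\<Sum>i\<in>{1..N} - T. (norm (y i))\<^sup>2) \<le> \<tau> * (\<Sum>i=1..N. (norm (y i))\<^sup>2)"
    using \<open>\<delta> > 0\<close> by (intro mult_left_mono sum_mono2) (auto simp: \<tau>_def)
  also have "\<dots> = \<delta>"
    using \<open>(frob_norm N y)\<^sup>2 > 0\<close> by (simp add: \<tau>_def frob_norm_sq)
  finally have tail: "\<tau> * (\<Sum>i\<in>{1..N} - T. (norm (y i))\<^sup>2) \<le> \<delta>" .
  have "lambda1 (\<Sum>i\<in>T. \<rho> k i *\<^sub>R outer (y i)) \<le> lambda1 (\<Sum>i=1..N. \<rho> k i *\<^sub>R outer (y i))"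
    using \<open>T \<subseteq> {1..N}\<close> dropped by (intro lambda1_sum_outer_subset_mono) auto
  moreover have "lambda1 (\<Sum>i=1..N. \<rho> k i *\<^sub>R outer (y i))
      \<le> lambda1 (\<Sum>i\<in>T. \<rho> k i *\<^sub>R outer (y i)) + \<tau> * (\<Sum>i\<in>{1..N} - T. (norm (y i))\<^sup>2)"
    using \<open>T \<subseteq> {1..N}\<close> dropped by (intro lambda1_sum_outer_drop_small_terms) auto
  ultimately show ?thesis
    using tail unfolding Let_def \<tau>_def[symmetric] T_def[symmetric] by linarith
qed

end
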